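(* Let $(\tilde X,\tilde Z)$ be $N\times N$ complex matrices with $\mathrm{rank}([\tilde X,\tilde Z]+I)=1$ and $\det(I+\tilde Z)\neq0$. Define $$X=I+\tilde Z^t,\qquad Z=\tilde X^t(I+\tilde Z^t).$$ Then $X$ is invertible and $\mathrm{rank}(XZX^{-1}-Z+I)=1$. Moreover, for the function $$\psi^b(n,z)=(1+z)^n\det\big\{I+\big(\tilde X-n(I+\tilde Z)^{-1}\big)^{-1}(zI-\tilde Z)^{-1}\big\},$$ one has $$\psi^b(z,e^x-1)=e^{xz}\det\big\{I-X(e^xI-X)^{-1}(zI-Z)^{-1}\big\}.$$
   Context: $M^t$ denotes the transpose of a matrix $M$, and $[A,B]=AB-BA$. *)

theory Defs
  imports "HOL-Analysis.Analysis"
begin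

definition commutator :: "complex^'n^'n \<Rightarrow> complex^'n^'n \<Rightarrow> complex^'n^'n" where
  "commutator A B = A ** B - B ** A"

text \<open>The determinant factor of psi^b(n,z) = (1+z)^n * psib_det Xt Zt n z, i.e.
  psib_det Xt Zt n z = det(I + (Xt - n (I+Zt)^{-1})^{-1} (z I - Zt)^{-1}).\<close>
definition psib_det :: "complex^'n^'n \<Rightarrow> complex^'n^'n \<Rightarrow> complex \<Rightarrow> complex \<Rightarrow> complex" where
  "psib_det Xt Zt n z =
     det (mat 1 + matrix_inv (Xt - mat n ** matrix_inv (mat 1 + Zt)) ** matrix_inv (mat z - Zt))"

end

theory Submission
  imports Defs
begin

(* Put A = I + Zt.  Then X = A^t and Z = Xt^t X, so conjugation by X
   gives  X Z X^-1 = X Xt^t  and hence  X Z X^-1 - Z + I = (Xt A - A Xt + I)^t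
   = ([Xt,Zt] + I)^t;  rank is invariant under transposition.
   For the determinant identity write w = e^x, so that (e^x - 1)I - Zt = wI - A and
   the matrix inside psi^b is  I + P^-1 Q^-1  with  P = Xt - z A^-1,  Q = wI - A.
   Since A P = -(zI - A Xt) =: -S we get P^-1 = -S^-1 A, and as A commutes with Q^-1,
   I + P^-1 Q^-1 = I - S^-1 Q^-1 A, which is exactly the transpose of
   I - X (wI - X)^-1 (zI - Z)^-1.  Determinants are invariant under transposition. *)

lemma matrix_diff_ldistrib: "(A::'a::comm_ring_1^'n^'m) ** (B - C) = A ** B - A ** C"
  by (vector matrix_matrix_mult_def sum_subtractf right_diff_distrib)

lemma matrix_diff_rdistrib: "((B::'a::comm_ring_1^'n^'m) - C) ** A = B ** A - C ** A"
  by (vector matrix_matrix_mult_def sum_subtractf left_diff_distrib)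

lemma matrix_add_rdistrib: "((B::'a::comm_ring_1^'n^'m) + C) ** A = B ** A + C ** A"
  by (vector matrix_matrix_mult_def sum.distrib distrib_right)

lemma matrix_neg_left: "(- (A::'a::comm_ring_1^'n^'m)) ** B = - (A ** B)"
  by (vector matrix_matrix_mult_def sum_negf)

lemma matrix_neg_right: "(A::'a::comm_ring_1^'n^'m) ** (- B) = - (A ** B)"
  by (vector matrix_matrix_mult_def sum_negf)

lemma scalar_matrix_commute: "mat z ** (A::'a::comm_ring_1^'n^'n) = A ** mat z"
proof -
  have "mat z ** A = (\<chi> i j. z * A$i$j)" "A ** mat z = (\<chi> i j. z * A$i$j)"
    unfolding matrix_matrix_mult_def mat_def
    by (auto simp: vec_eq_iff if_distrib if_distribR sum.delta'[OF finite] mult.commute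
        cong: if_cong)
  then show ?thesis by simp
qed

lemma mat_diff: "(mat (a - b) :: 'a::comm_ring_1^'n^'n) = mat a - mat b"
  by (vector mat_def)

lemma transpose_diff: "transpose ((A::'a::comm_ring_1^'n^'m) - B) = transpose A - transpose B"
  by (vector transpose_def)

lemma transpose_add: "transpose ((A::'a::comm_ring_1^'n^'m) + B) = transpose A + transpose B"
  by (vector transpose_def)

lemma matrix_inv_right_left:
  fixes A :: "'a::field^'n^'n"
  assumes "invertible A"
  shows matrix_inv_right: "A ** matrix_inv A = mat 1"
    and matrix_inv_left: "matrix_inv A ** A = mat 1"
proof -
  have "\<exists>A'. A ** A' = mat 1 \<and> A' ** A = mat 1"
    using assms unfolding invertible_def by blast
  from someI_ex[OF this] show "A ** matrix_inv A = mat 1" "matrix_inv A ** A = mat 1"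
    unfolding matrix_inv_def by auto
qed

lemma matrix_inv_eqI:
  fixes A B :: "'a::field^'n^'n"
  assumes AB: "A ** B = mat 1"
  shows "matrix_inv A = B"
proof -
  have inv: "invertible A" using AB invertible_right_inverse by blast
  have "matrix_inv A = matrix_inv A ** (A ** B)" using AB by simp
  also have "\<dots> = B" by (simp add: matrix_mul_assoc matrix_inv_left[OF inv])
  finally show ?thesis .
qed

lemma transpose_matrix_inv:
  fixes A :: "'a::field^'n^'n"
  assumes "invertible A"
  shows "matrix_inv (transpose A) = transpose (matrix_inv A)"
  by (rule matrix_inv_eqI)
    (metis matrix_inv_left[OF assms] matrix_transpose_mul transpose_mat)

lemma matrix_inv_commute:
  fixes A Q :: "'a::field^'n^'n"
  assumes invQ: "invertible Q" and QA: "Q ** A = A ** Q"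
  shows "matrix_inv Q ** A = A ** matrix_inv Q"
proof -
  have "matrix_inv Q ** A = matrix_inv Q ** (A ** Q) ** matrix_inv Q"
    by (simp add: matrix_mul_assoc[symmetric] matrix_inv_right[OF invQ])
  also have "\<dots> = matrix_inv Q ** Q ** A ** matrix_inv Q"
    by (simp add: QA[symmetric] matrix_mul_assoc)
  finally show ?thesis by (simp add: matrix_inv_left[OF invQ])
qed

text \<open>Column rank is at most row rank over any field: every column is a combination
  of the coefficient vectors expressing the rows in a basis of the row space.\<close>
lemma rank_transpose_le:
  fixes A :: "'a::field^'n^'m"
  shows "rank (transpose A) \<le> rank A"
proof -
  obtain B where B: "vec.independent B" "rows A \<subseteq> vec.span B" "card B = vec.dim (rows A)"
    using vec.basis_exists by blast
  have fB: "finite B" using B(1) vec.finiteI_independent by blast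
  have "\<forall>i. \<exists>u. row i A = (\<Sum>v\<in>B. u v *s v)"
  proof
    fix i
    have "row i A \<in> vec.span B" using B(2) unfolding rows_def by blast
    then show "\<exists>u. row i A = (\<Sum>v\<in>B. u v *s v)" unfolding vec.span_finite[OF fB] by blast
  qed
  then obtain c where c: "\<And>i. row i A = (\<Sum>v\<in>B. c i v *s v)" by metis
  define W where "W = (\<lambda>v. \<chi> i. c i v) ` B"
  have entries: "A$i$j = (\<Sum>v\<in>B. c i v * v$j)" for i j
    using arg_cong[OF c[of i], of "\<lambda>r. r$j"] by (simp add: row_def sum_component)
  have "columns A \<subseteq> vec.span W"
  proof
    fix y assume "y \<in> columns A"
    then obtain j where j: "y = column j A" unfolding columns_def by blast
    then have "y = (\<Sum>v\<in>B. (v$j) *s (\<chi> i. c i v))"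
      by (simp add: entries column_def vec_eq_iff sum_component mult.commute)
    also have "\<dots> \<in> vec.span W"
      unfolding W_def by (intro vec.span_sum vec.span_scale vec.span_base) auto
    finally show "y \<in> vec.span W" .
  qed
  then have "vec.dim (columns A) \<le> card W"
    by (rule vec.dim_le_card) (use fB in \<open>auto simp: W_def\<close>)
  also have "\<dots> \<le> card B" unfolding W_def using fB card_image_le by blast
  finally show ?thesis unfolding row_rank_def_gen B(3) by (simp add: rows_transpose)
qed

lemma rank_transpose_field:
  fixes A :: "'a::field^'n^'m"
  shows "rank (transpose A) = rank A"
  using rank_transpose_le[of A] rank_transpose_le[of "transpose A"] by simp

lemma conjugate_shift_transpose:
  fixes Y A :: "'a::field^'n^'n"
  assumes invA: "invertible A"
  shows "transpose A ** (transpose Y ** transpose A) ** matrix_inv (transpose A)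
           - transpose Y ** transpose A + mat 1
         = transpose (Y ** A - A ** Y + mat 1)"
proof -
  have invX: "invertible (transpose A)" using invA by (simp add: invertible_det_nz)
  have "transpose A ** (transpose Y ** transpose A) ** matrix_inv (transpose A)
        = transpose A ** transpose Y"
    by (simp add: matrix_mul_assoc[symmetric] matrix_inv_right[OF invX])
  then show ?thesis by (simp add: transpose_add transpose_diff matrix_transpose_mul)
qed

text \<open>Key step of the second identity: with S = zI - A Y one has
  A (Y - z A^-1) = -S, hence (Y - z A^-1)^-1 = -S^-1 A.\<close>
lemma matrix_inv_shift:
  fixes Y A :: "'a::field^'n^'n"
  assumes invA: "invertible A" and invS: "invertible (mat z - A ** Y)"
  shows "matrix_inv (Y - mat z ** matrix_inv A) = - (matrix_inv (mat z - A ** Y) ** A)"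
proof (rule matrix_inv_eqI)
  let ?S = "mat z - A ** Y"
  have "A ** mat z ** matrix_inv A = mat z ** (A ** matrix_inv A)"
    by (simp add: scalar_matrix_commute matrix_mul_assoc)
  then have AP: "A ** (Y - mat z ** matrix_inv A) = - ?S"
    by (simp add: matrix_diff_ldistrib matrix_mul_assoc matrix_inv_right[OF invA])
  have "Y - mat z ** matrix_inv A = matrix_inv A ** (A ** (Y - mat z ** matrix_inv A))"
    by (simp add: matrix_mul_assoc matrix_inv_left[OF invA])
  then have P: "Y - mat z ** matrix_inv A = - (matrix_inv A ** ?S)"
    by (simp add: AP flip: matrix_neg_right)
  have "(Y - mat z ** matrix_inv A) ** - (matrix_inv ?S ** A)
        = matrix_inv A ** (?S ** matrix_inv ?S) ** A"
    by (simp add: P matrix_neg_left matrix_neg_right matrix_mul_assoc)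
  then show "(Y - mat z ** matrix_inv A) ** - (matrix_inv ?S ** A) = mat 1"
    by (simp add: matrix_inv_right[OF invS] matrix_inv_left[OF invA])
qed

lemma det_resolvent_transpose:
  fixes Y A :: "'a::field^'n^'n"
  assumes invA: "invertible A" and invQ: "invertible (mat w - A)"
    and invS: "invertible (mat z - A ** Y)"
  shows "det (mat 1 + matrix_inv (Y - mat z ** matrix_inv A) ** matrix_inv (mat w - A))
       = det (mat 1 - transpose A ** matrix_inv (mat w - transpose A)
                ** matrix_inv (mat z - transpose Y ** transpose A))"
proof -
  let ?Q = "mat w - A" and ?S = "mat z - A ** Y"
  have "?Q ** A = A ** ?Q"
    by (simp add: matrix_diff_ldistrib matrix_diff_rdistrib scalar_matrix_commute)
  then have QA: "matrix_inv ?Q ** A = A ** matrix_inv ?Q"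
    by (rule matrix_inv_commute[OF invQ])
  have lhs: "mat 1 + matrix_inv (Y - mat z ** matrix_inv A) ** matrix_inv ?Q
             = mat 1 - matrix_inv ?S ** matrix_inv ?Q ** A"
    by (simp add: matrix_inv_shift[OF invA invS] matrix_neg_left
        matrix_mul_assoc[symmetric] QA)
  have tQ: "mat w - transpose A = transpose ?Q" by (simp add: transpose_diff)
  have tS: "mat z - transpose Y ** transpose A = transpose ?S"
    by (simp add: transpose_diff matrix_transpose_mul)
  let ?R = "mat 1 - transpose A ** matrix_inv (transpose ?Q) ** matrix_inv (transpose ?S)"
  have "?R = mat 1 - transpose A ** transpose (matrix_inv ?Q) ** transpose (matrix_inv ?S)"
    by (simp only: transpose_matrix_inv[OF invQ] transpose_matrix_inv[OF invS])
  also have "\<dots> = transpose (mat 1 - matrix_inv ?S ** matrix_inv ?Q ** A)"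
    by (simp only: transpose_diff transpose_mat matrix_transpose_mul matrix_mul_assoc)
  finally have "det ?R = det (mat 1 - matrix_inv ?S ** matrix_inv ?Q ** A)"
    by (simp only: det_transpose)
  then show ?thesis by (simp only: lhs tQ tS)
qed

theorem mainTheorem9:
  fixes Xt Zt :: "complex^'n^'n"
  assumes rk: "rank (commutator Xt Zt + mat 1) = 1"
    and det_ne: "det (mat 1 + Zt) \<noteq> 0"
  defines "X \<equiv> mat 1 + transpose Zt"
    and "Z \<equiv> transpose Xt ** (mat 1 + transpose Zt)"
  shows "invertible X
    \<and> rank (X ** Z ** matrix_inv X - Z + mat 1) = 1
    \<and> (\<forall>x z :: complex.
          det (Xt - mat z ** matrix_inv (mat 1 + Zt)) \<noteq> 0
        \<longrightarrow> det (mat (exp x - 1) - Zt) \<noteq> 0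
        \<longrightarrow> det (mat (exp x) - X) \<noteq> 0
        \<longrightarrow> det (mat z - Z) \<noteq> 0
        \<longrightarrow> exp (x * z) * psib_det Xt Zt z (exp x - 1)
            = exp (x * z) * det (mat 1 - X ** matrix_inv (mat (exp x) - X) ** matrix_inv (mat z - Z)))"
proof -
  define A where "A = mat 1 + Zt"
  have invA: "invertible A" using det_ne by (simp add: A_def invertible_det_nz)
  have X: "X = transpose A" and Z: "Z = transpose Xt ** transpose A"
    by (simp_all add: X_def Z_def A_def transpose_add)
  have "invertible X" using invA by (simp add: X invertible_det_nz)
  moreover have "Xt ** A - A ** Xt = commutator Xt Zt"
    by (simp add: A_def commutator_def matrix_add_ldistrib matrix_add_rdistrib)
  then have "rank (X ** Z ** matrix_inv X - Z + mat 1) = 1"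
    using rk by (simp add: X Z conjugate_shift_transpose[OF invA] rank_transpose_field)
  txt \<open>Invertibility of P = Xt - z A^-1 and of e^x I - X is implied by the other
    two hypotheses, so only those are needed.\<close>
  moreover have "psib_det Xt Zt z (exp x - 1)
                 = det (mat 1 - X ** matrix_inv (mat (exp x) - X) ** matrix_inv (mat z - Z))"
    if "det (mat (exp x - 1) - Zt) \<noteq> 0" and "det (mat z - Z) \<noteq> 0" for x z
  proof -
    have Q: "mat (exp x - 1) - Zt = mat (exp x) - A" by (simp add: A_def mat_diff)
    then have invQ: "invertible (mat (exp x) - A)" using that(1) by (simp add: invertible_det_nz)
    have "mat z - Z = transpose (mat z - A ** Xt)"
      by (simp add: Z transpose_diff matrix_transpose_mul)
    then have invS: "invertible (mat z - A ** Xt)" using that(2) by (simp add: invertible_det_nz)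
    have "psib_det Xt Zt z (exp x - 1)
          = det (mat 1 + matrix_inv (Xt - mat z ** matrix_inv A) ** matrix_inv (mat (exp x) - A))"
      unfolding psib_det_def Q A_def ..
    then show ?thesis by (simp add: det_resolvent_transpose[OF invA invQ invS] X Z)
  qed
  ultimately show ?thesis by auto
qed

end
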